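(* Let $E$ be a nonempty finite set and let $\mathcal{I}, \mathcal{I}' \subseteq 2^E$ be constructible families with $\mathrm{Max}(\mathcal{I}) = \mathrm{Max}(\mathcal{I}')$. Then the rank function $\rho'$ associated with $\mathcal{I}'$ coincides with the rank function $\rho$ associated with $\mathcal{I}$.
   Context: For a family $\mathcal{I} \subseteq 2^E$, $\mathrm{Max}(\mathcal{I})$ denotes the set of maximal members of $\mathcal{I}$ with respect to inclusion. For $I \in \mathcal{I}$, $\mathrm{ex}_{\mathcal{I}}(I) := \{e \in I \mid I \setminus \{e\} \in \mathcal{I}\}$. A nonempty family $\mathcal{I}$ is constructible if $\mathrm{ex}_{\mathcal{I}}(I) \neq \emptyset$ for all $I \in \mathcal{I}\setminus\{\emptyset\}$. The rank function of a constructible family $\mathcal{I}$ is $\rho(X) = \max_{I \in \mathcal{I}} |X \cap I|$ for $X \subseteq E$ (equivalently the maximum of $|X\cap B|$ over bases $B$, i.e. members $B \in \mathcal{I}$ such that $B \cup\{e\} \notin \mathcal{I}$ for all $e \in E\setminus B$). *)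

theory Defs
  imports Main
begin

definition Maxl :: "'a set set \<Rightarrow> 'a set set" where
  "Maxl \<F> = {I \<in> \<F>. \<forall>J\<in>\<F>. I \<subseteq> J \<longrightarrow> J = I}"

definition ex_fam :: "'a set set \<Rightarrow> 'a set \<Rightarrow> 'a set" where
  "ex_fam \<F> I = {e \<in> I. I - {e} \<in> \<F>}"

definition constructible :: "'a set set \<Rightarrow> bool" where
  "constructible \<F> \<longleftrightarrow> \<F> \<noteq> {} \<and> (\<forall>I\<in>\<F> - {{}}. ex_fam \<F> I \<noteq> {})"

definition rank_fam :: "'a set set \<Rightarrow> 'a set \<Rightarrow> nat" where
  "rank_fam \<F> X = Max ((\<lambda>I. card (X \<inter> I)) ` \<F>)"

end

theory Submission
  imports Defs
begin

text \<open>Since \<open>|X \<inter> I|\<close> is monotone in \<open>I\<close> and every member of a finite family lies below a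
  maximal one, the maximum defining the rank is attained on the maximal members. Hence the rank
  depends only on \<open>Max(\<I>)\<close>; constructibility is used only to know the families are nonempty.\<close>

lemma Maxl_subset: "Maxl F \<subseteq> F"
  unfolding Maxl_def by blast

lemma finite_family_subset_Maxl:
  assumes "finite F" and "I \<in> F"
  shows "\<exists>J\<in>Maxl F. I \<subseteq> J"
proof -
  obtain J where "J \<in> F" "I \<subseteq> J" and "\<forall>K\<in>F. J \<subseteq> K \<longrightarrow> J = K"
    using finite_has_maximal2[OF assms] by blast
  then show ?thesis
    unfolding Maxl_def by force
qed

lemma rank_fam_eq_Max_Maxl:
  assumes "finite E" and "F \<subseteq> Pow E" and "F \<noteq> {}"
  shows "rank_fam F X = Max ((\<lambda>I. card (X \<inter> I)) ` Maxl F)"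
proof -
  let ?r = "\<lambda>I. card (X \<inter> I)"
  have finF: "finite F"
    using assms(1,2) by (meson finite_Pow_iff finite_subset)
  have finM: "finite (Maxl F)"
    using finF Maxl_subset by (rule rev_finite_subset)
  have neM: "Maxl F \<noteq> {}"
    using assms(3) finite_family_subset_Maxl[OF finF] by blast
  have dominated: "\<exists>J\<in>Maxl F. ?r I \<le> ?r J" if I: "I \<in> F" for I
  proof -
    obtain J where J: "J \<in> Maxl F" "I \<subseteq> J"
      using finite_family_subset_Maxl[OF finF I] by blast
    have "J \<subseteq> E"
      using J(1) Maxl_subset assms(2) by blast
    then have "finite J"
      using assms(1) by (rule finite_subset)
    then have "?r I \<le> ?r J"
      using J(2) by (intro card_mono) auto
    with J(1) show ?thesis by blast
  qed
  show ?thesis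
    unfolding rank_fam_def
  proof (rule antisym)
    show "Max (?r ` F) \<le> Max (?r ` Maxl F)"
    proof (rule Max.boundedI)
      fix y assume "y \<in> ?r ` F"
      then obtain I where "I \<in> F" and y: "y = ?r I" by blast
      then obtain J where "J \<in> Maxl F" and "?r I \<le> ?r J" using dominated by blast
      moreover have "?r J \<le> Max (?r ` Maxl F)"
        using \<open>J \<in> Maxl F\<close> finM by simp
      ultimately show "y \<le> Max (?r ` Maxl F)"
        using y by linarith
    qed (simp_all add: finF assms(3))
    show "Max (?r ` Maxl F) \<le> Max (?r ` F)"
      by (rule Max_mono) (simp_all add: image_mono Maxl_subset neM finF)
  qed
qed

theorem proposition3p2:
  fixes E :: "'a set" and \<I> \<I>' :: "'a set set"
  assumes "finite E" and "E \<noteq> {}"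
    and "\<I> \<subseteq> Pow E" and "\<I>' \<subseteq> Pow E"
    and "constructible \<I>" and "constructible \<I>'"
    and "Maxl \<I> = Maxl \<I>'"
  shows "\<forall>X \<subseteq> E. rank_fam \<I>' X = rank_fam \<I> X"
proof -
  have "\<I> \<noteq> {}" and "\<I>' \<noteq> {}"
    using assms(5,6) unfolding constructible_def by auto
  then show ?thesis
    using rank_fam_eq_Max_Maxl[OF assms(1,3)] rank_fam_eq_Max_Maxl[OF assms(1,4)]
    by (simp add: assms(7))
qed

end
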